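(* Let $p$ be a prime, let $d,n$ be natural numbers, and let $A\subseteq\{0,1\}^n\subseteq\mathbb{F}_p^n$ satisfy $|A|>p\cdot|\mathcal{M}_{\lfloor d/p\rfloor}(p,n)|$. Then $\mathsf{int\text{-}deg}_p(p\cdot A)>d$.
   Context: For $A\subseteq\mathbb{F}_p^n$ and a positive integer $k$, $k\cdot A=\{a_1+\dots+a_k \mid a_i\in A\}$ is the $k$-fold sumset (addition in $\mathbb{F}_p^n$). A polynomial in $\mathbb{F}_p[x_1,\dots,x_n]$ is $p$-reduced if each variable appears with individual degree at most $p-1$; every function $\mathbb{F}_p^n\to\mathbb{F}_p$ is represented by a unique $p$-reduced polynomial. For $B\subseteq\mathbb{F}_p^n$, $\mathsf{int\text{-}deg}_p(B)$ is the minimum $d$ such that every function $f:B\to\mathbb{F}_p$ agrees on $B$ with some $p$-reduced polynomial of total degree at most $d$. $\mathcal{M}_k(p,n)$ denotes the set of monomials in $x_1,\dots,x_n$ in which each variable has degree at most $p-1$ and the total degree is at most $k$. *)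

theory Defs
  imports Main "HOL-Computational_Algebra.Primes"
begin

definition Fpn :: "nat \<Rightarrow> nat \<Rightarrow> (nat \<Rightarrow> nat) set" where
  "Fpn p n = {x. (\<forall>i<n. x i < p) \<and> (\<forall>i\<ge>n. x i = 0)}"

definition cube :: "nat \<Rightarrow> (nat \<Rightarrow> nat) set" where
  "cube n = {x. (\<forall>i<n. x i \<le> 1) \<and> (\<forall>i\<ge>n. x i = 0)}"

definition kfold_sumset :: "nat \<Rightarrow> nat \<Rightarrow> (nat \<Rightarrow> nat) set \<Rightarrow> (nat \<Rightarrow> nat) set" where
  "kfold_sumset p k A = {(\<lambda>i. (\<Sum>j<k. a j i) mod p) | a. \<forall>j<k. a j \<in> A}"

definition monomials :: "nat \<Rightarrow> nat \<Rightarrow> nat \<Rightarrow> (nat \<Rightarrow> nat) set" where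
  "monomials k p n = {e. (\<forall>i<n. e i \<le> p - 1) \<and> (\<forall>i\<ge>n. e i = 0) \<and> (\<Sum>i<n. e i) \<le> k}"

definition eval_poly :: "nat \<Rightarrow> nat \<Rightarrow> nat \<Rightarrow> ((nat \<Rightarrow> nat) \<Rightarrow> nat) \<Rightarrow> (nat \<Rightarrow> nat) \<Rightarrow> nat" where
  "eval_poly d p n c x = (\<Sum>e\<in>monomials d p n. c e * (\<Prod>i<n. x i ^ e i)) mod p"

definition interpolates :: "nat \<Rightarrow> nat \<Rightarrow> nat \<Rightarrow> (nat \<Rightarrow> nat) set \<Rightarrow> bool" where
  "interpolates d p n B \<longleftrightarrow>
     (\<forall>f. (\<forall>x\<in>B. f x < p) \<longrightarrow> (\<exists>c. \<forall>x\<in>B. f x = eval_poly d p n c x))"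

definition int_deg :: "nat \<Rightarrow> nat \<Rightarrow> (nat \<Rightarrow> nat) set \<Rightarrow> nat" where
  "int_deg p n B = (LEAST d. interpolates d p n B)"

end

theory Submission
  imports Defs "HOL-Number_Theory.Number_Theory" "HOL-Library.FuncSet"
begin

text \<open>Let \<open>P\<close> be a \<open>p\<close>-reduced polynomial of degree at most \<open>d\<close> that is \<open>1\<close> at \<open>0\<close> and \<open>0\<close> elsewhere
  on \<open>p\<cdot>A\<close>. Then \<open>T(a\<^sub>1, \<dots>, a\<^sub>p) = P(a\<^sub>1 + \<dots> + a\<^sub>p)\<close> is a diagonal function on \<open>A\<^sup>p\<close> with nonzero
  diagonal, because \<open>p\<close> vectors of \<open>{0,1}\<^sup>n\<close> sum to \<open>0\<close> in \<open>\<bbbF>\<^sub>p\<^sup>n\<close> only if they coincide; by Tao's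
  lemma its slice rank is \<open>|A|\<close>. On binary inputs \<open>T\<close> is a multilinear polynomial of degree
  \<open>d < p (\<lfloor>d/p\<rfloor> + 1)\<close> in the \<open>p n\<close> coordinates, so each monomial contains at most \<open>\<lfloor>d/p\<rfloor>\<close>
  variables of one of the \<open>p\<close> blocks; hence the slice rank is at most \<open>p |M\<^bsub>\<lfloor>d/p\<rfloor>\<^esub>(p,n)|\<close>.
  Linear algebra over \<open>\<bbbF>\<^sub>p\<close> is done with integers modulo \<open>p\<close>, and dimensions are replaced by
  counting vectors with entries in \<open>{0..<p}\<close>.\<close>

section \<open>Annihilators over \<open>\<int>/p\<close>\<close>

definition annihilator :: "nat \<Rightarrow> 'x set \<Rightarrow> 'r set \<Rightarrow> ('r \<Rightarrow> 'x \<Rightarrow> int) \<Rightarrow> ('x \<Rightarrow> int) set" where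
  "annihilator p S R F =
     {h \<in> S \<rightarrow>\<^sub>E {0..<int p}. \<forall>r\<in>R. [(\<Sum>b\<in>S. F r b * h b) = 0] (mod int p)}"

definition lincomb_mod :: "nat \<Rightarrow> 'x set \<Rightarrow> ('x \<Rightarrow> int) \<Rightarrow> int \<Rightarrow> ('x \<Rightarrow> int) \<Rightarrow> 'x \<Rightarrow> int" where
  "lincomb_mod p S h s k = restrict (\<lambda>b. (h b + s * k b) mod int p) S"

lemma finite_annihilator: "finite S \<Longrightarrow> finite (annihilator p S R F)"
  by (rule finite_subset[of _ "S \<rightarrow>\<^sub>E {0..<int p}"]) (auto simp: annihilator_def finite_PiE)

lemma zero_in_annihilator: "p > 0 \<Longrightarrow> restrict (\<lambda>_. 0) S \<in> annihilator p S R F"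
  by (simp add: annihilator_def)

lemma lincomb_mod_in_PiE:
  "p > 0 \<Longrightarrow> lincomb_mod p S h s k \<in> S \<rightarrow>\<^sub>E {0..<int p}"
  by (auto simp: lincomb_mod_def)

lemma sum_lincomb_mod_cong:
  "[(\<Sum>b\<in>S. f b * lincomb_mod p S h s k b) = (\<Sum>b\<in>S. f b * h b) + s * (\<Sum>b\<in>S. f b * k b)] (mod int p)"
proof -
  have "[(\<Sum>b\<in>S. f b * lincomb_mod p S h s k b) = (\<Sum>b\<in>S. f b * (h b + s * k b))] (mod int p)"
    by (intro cong_sum cong_mult cong_refl) (simp add: lincomb_mod_def)
  also have "(\<Sum>b\<in>S. f b * (h b + s * k b)) = (\<Sum>b\<in>S. f b * h b) + s * (\<Sum>b\<in>S. f b * k b)"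
    by (simp add: algebra_simps sum.distrib sum_distrib_left)
  finally show ?thesis .
qed

lemma lincomb_mod_annihilator:
  assumes "h \<in> annihilator p S R F" "k \<in> annihilator p S R F" "p > 0"
  shows "lincomb_mod p S h s k \<in> annihilator p S R F"
proof -
  have "[(\<Sum>b\<in>S. F r b * lincomb_mod p S h s k b) = 0] (mod int p)" if "r \<in> R" for r
  proof -
    have "[(\<Sum>b\<in>S. F r b * h b) + s * (\<Sum>b\<in>S. F r b * k b) = 0 + s * 0] (mod int p)"
      using assms(1,2) that by (intro cong_add cong_mult cong_refl) (auto simp: annihilator_def)
    with sum_lincomb_mod_cong show ?thesis by (metis cong_trans add_0 mult_zero_right)
  qed
  with assms(3) show ?thesis by (simp add: annihilator_def lincomb_mod_in_PiE)
qed

lemma residue_vectors_cong_imp_eq: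
  fixes m :: int
  assumes "h \<in> S \<rightarrow>\<^sub>E {0..<m}" "k \<in> S \<rightarrow>\<^sub>E {0..<m}" "b \<in> S" "[h b = k b] (mod m)"
  shows "h b = k b"
  using PiE_mem[OF assms(1,3)] PiE_mem[OF assms(2,3)] assms(4) by (auto intro: cong_less_imp_eq_int)

lemma lincomb_mod_minus_eq_0_iff:
  assumes "h \<in> S \<rightarrow>\<^sub>E {0..<int p}" "k \<in> S \<rightarrow>\<^sub>E {0..<int p}" "b \<in> S"
  shows "lincomb_mod p S h (-1) k b = 0 \<longleftrightarrow> h b = k b"
proof -
  have "(h b - k b) mod int p = 0 \<longleftrightarrow> [h b = k b] (mod int p)"
    by (simp add: cong_iff_dvd_diff mod_eq_0_iff_dvd)
  also have "\<dots> \<longleftrightarrow> h b = k b"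
    using residue_vectors_cong_imp_eq[OF assms] by auto
  finally show ?thesis using assms(3) by (simp add: lincomb_mod_def)
qed

lemma lincomb_mod_minus_in_annihilator:
  assumes "p > 0" "\<forall>r\<in>R. [(\<Sum>b\<in>S. F r b * h b) = (\<Sum>b\<in>S. F r b * g b)] (mod int p)"
  shows "lincomb_mod p S h (-1) g \<in> annihilator p S R F"
proof -
  have "[(\<Sum>b\<in>S. F r b * lincomb_mod p S h (-1) g b) = 0] (mod int p)" if "r \<in> R" for r
  proof -
    have "[(\<Sum>b\<in>S. F r b * h b) + -1 * (\<Sum>b\<in>S. F r b * g b) = 0] (mod int p)"
      using assms(2) that by (simp add: cong_iff_dvd_diff)
    with sum_lincomb_mod_cong show ?thesis by (rule cong_trans)
  qed
  then show ?thesis by (simp add: annihilator_def lincomb_mod_in_PiE assms(1))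
qed

lemma lincomb_mod_minus_cancel:
  assumes "h \<in> S \<rightarrow>\<^sub>E {0..<int p}" "g \<in> S \<rightarrow>\<^sub>E {0..<int p}"
    and "lincomb_mod p S h (-1) k = lincomb_mod p S g (-1) k"
  shows "h = g"
proof (rule PiE_ext[OF assms(1,2)])
  fix b assume "b \<in> S"
  then have "[h b - k b = g b - k b] (mod int p)"
    using fun_cong[OF assms(3), of b] by (simp add: lincomb_mod_def cong_def)
  then have "[h b = g b] (mod int p)"
    using cong_add_rcancel[of "h b" "- k b" "g b"] by (simp only: diff_conv_add_uminus)
  then show "h b = g b" by (rule residue_vectors_cong_imp_eq[OF assms(1,2) \<open>b \<in> S\<close>])
qed

text \<open>Rank--nullity, counted: a vector is determined by its syndrome and its difference to a
  fixed representative of that syndrome, which lies in the annihilator.\<close>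
lemma card_annihilator_lower:
  assumes "finite S" "finite R" "p > 0"
  shows "p ^ card S \<le> p ^ card R * card (annihilator p S R F)"
proof -
  let ?V = "S \<rightarrow>\<^sub>E {0..<int p}" and ?W = "annihilator p S R F"
  define syn where "syn h = restrict (\<lambda>r. (\<Sum>b\<in>S. F r b * h b) mod int p) R" for h
  define rep where "rep v = (SOME h. h \<in> ?V \<and> syn h = v)" for v
  define enc where "enc h = (syn h, lincomb_mod p S h (-1) (rep (syn h)))" for h
  have rep: "rep (syn h) \<in> ?V \<and> syn (rep (syn h)) = syn h" if "h \<in> ?V" for h
  proof -
    have "\<exists>g. g \<in> ?V \<and> syn g = syn h" using that by blast
    then show ?thesis unfolding rep_def by (rule someI_ex)
  qed
  have "inj_on enc ?V"
  proof (rule inj_onI)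
    fix h g assume "h \<in> ?V" "g \<in> ?V" and "enc h = enc g"
    then have "syn h = syn g \<and>
        lincomb_mod p S h (-1) (rep (syn h)) = lincomb_mod p S g (-1) (rep (syn g))"
      unfolding enc_def prod.inject by blast
    then show "h = g" using lincomb_mod_minus_cancel[OF \<open>h \<in> ?V\<close> \<open>g \<in> ?V\<close>] by auto
  qed
  moreover have "enc ` ?V \<subseteq> (R \<rightarrow>\<^sub>E {0..<int p}) \<times> ?W"
  proof (rule image_subsetI)
    fix h assume "h \<in> ?V"
    have "[(\<Sum>b\<in>S. F r b * h b) = (\<Sum>b\<in>S. F r b * rep (syn h) b)] (mod int p)" if "r \<in> R" for r
      using fun_cong[OF conjunct2[OF rep[OF \<open>h \<in> ?V\<close>]], of r] that by (simp add: syn_def cong_def)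
    then have "lincomb_mod p S h (-1) (rep (syn h)) \<in> ?W"
      using assms(3) by (intro lincomb_mod_minus_in_annihilator) auto
    then show "enc h \<in> (R \<rightarrow>\<^sub>E {0..<int p}) \<times> ?W" using assms(3) by (simp add: enc_def syn_def)
  qed
  ultimately have "card ?V \<le> card ((R \<rightarrow>\<^sub>E {0..<int p}) \<times> ?W)"
    by (intro card_inj_on_le) (auto simp: finite_PiE assms(2) finite_annihilator[OF assms(1)])
  then show ?thesis using assms(1,2) by (simp add: card_PiE card_cartesian_product)
qed

lemma card_annihilator_ge:
  assumes "finite S" "finite R" "p > 0"
  shows "p ^ (card S - card R) \<le> card (annihilator p S R F)"
proof (cases "card R \<le> card S")
  case True
  then have "p ^ card R * p ^ (card S - card R) \<le> p ^ card R * card (annihilator p S R F)"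
    using card_annihilator_lower[OF assms, of F] by (simp flip: power_add)
  then show ?thesis using assms(3) by simp
next
  case False
  then show ?thesis
    using zero_in_annihilator[OF assms(3)] finite_annihilator[OF assms(1)]
    by (simp add: Suc_le_eq card_gt_0_iff) blast
qed

lemma annihilator_enlarge_support:
  assumes "finite S" "p > 0" "h \<in> annihilator p S R F"
    and "h1 \<in> annihilator p S R F" "h2 \<in> annihilator p S R F" "h1 \<noteq> h2"
    and agree: "\<forall>b\<in>S. h b \<noteq> 0 \<longrightarrow> h1 b = h2 b"
  shows "\<exists>h'\<in>annihilator p S R F. card {b\<in>S. h b \<noteq> 0} < card {b\<in>S. h' b \<noteq> 0}"
proof -
  let ?W = "annihilator p S R F" and ?U = "{b\<in>S. h b \<noteq> 0}"
  let ?k = "lincomb_mod p S h1 (-1) h2"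
  let ?h' = "lincomb_mod p S h 1 ?k"
  have k: "?k \<in> ?W" and "?h' \<in> ?W"
    using assms(2-5) by (simp_all add: lincomb_mod_annihilator)
  have vec: "h1 \<in> S \<rightarrow>\<^sub>E {0..<int p}" "h2 \<in> S \<rightarrow>\<^sub>E {0..<int p}"
    using assms(4,5) by (auto simp: annihilator_def)
  obtain b0 where "b0 \<in> S" "h1 b0 \<noteq> h2 b0"
    using assms(6) PiE_ext[OF vec] by blast
  then have "?k b0 \<noteq> 0" "b0 \<notin> ?U" using lincomb_mod_minus_eq_0_iff[OF vec] agree by auto
  have bounds: "0 \<le> h b" "h b < int p" "0 \<le> ?k b" "?k b < int p" if "b \<in> S" for b
    using assms(3) k that by (auto simp: annihilator_def)
  have "?h' b = h b" if "b \<in> ?U" for b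
    using that bounds lincomb_mod_minus_eq_0_iff[OF vec] agree by (simp add: lincomb_mod_def)
  moreover have "?h' b0 = ?k b0"
    using bounds \<open>b0 \<in> S\<close> \<open>b0 \<notin> ?U\<close> by (simp add: lincomb_mod_def)
  ultimately have "insert b0 ?U \<subseteq> {b\<in>S. ?h' b \<noteq> 0}"
    using \<open>b0 \<in> S\<close> \<open>?k b0 \<noteq> 0\<close> by auto
  then have "card ?U < card {b\<in>S. ?h' b \<noteq> 0}"
    using card_mono[of "{b\<in>S. ?h' b \<noteq> 0}" "insert b0 ?U"] \<open>b0 \<notin> ?U\<close> assms(1) by simp
  with \<open>?h' \<in> ?W\<close> show ?thesis by blast
qed

text \<open>A vector of maximal support \<open>U\<close> works: otherwise \<open>|W| > p\<^bsup>|U|\<^esup>\<close> yields two vectors of \<open>W\<close>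
  that agree on \<open>U\<close>.\<close>
lemma annihilator_large_support:
  assumes "finite S" "finite R" "p > 1"
  shows "\<exists>h\<in>annihilator p S R F. card S \<le> card {b\<in>S. h b \<noteq> 0} + card R"
proof -
  let ?W = "annihilator p S R F" and ?supp = "\<lambda>h. {b\<in>S. h b \<noteq> 0}"
  have "\<exists>h. h \<in> ?W \<and> (\<forall>g. g \<in> ?W \<longrightarrow> card (?supp g) \<le> card (?supp h))"
    by (rule ex_has_greatest_nat[where k = "restrict (\<lambda>_. 0) S" and b = "Suc (card S)"])
      (use zero_in_annihilator[of p] assms in \<open>auto intro!: le_imp_less_Suc card_mono\<close>)
  then obtain h where h: "h \<in> ?W" and h_max: "\<And>g. g \<in> ?W \<Longrightarrow> card (?supp g) \<le> card (?supp h)"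
    by blast
  show ?thesis
  proof (rule ccontr)
    assume "\<not> ?thesis"
    then have small: "card (?supp h) + card R < card S" using h by force
    let ?U = "?supp h"
    have "card ((\<lambda>g. restrict g ?U) ` ?W) \<le> card (?U \<rightarrow>\<^sub>E {0..<int p})"
      by (intro card_mono finite_PiE) (use assms(1) in \<open>auto simp: annihilator_def\<close>)
    also have "\<dots> = p ^ card ?U" using assms(1) by (simp add: card_PiE)
    also have "\<dots> < p ^ (card S - card R)"
      using small assms(3) by (intro power_strict_increasing) auto
    also have "\<dots> \<le> card ?W" using assms by (intro card_annihilator_ge) auto
    finally have "\<not> inj_on (\<lambda>g. restrict g ?U) ?W" using card_image by fastforce
    then obtain h1 h2 where "h1 \<in> ?W" "h2 \<in> ?W" "h1 \<noteq> h2"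
      and restr_eq: "restrict h1 ?U = restrict h2 ?U"
      unfolding inj_on_def by blast
    have "\<forall>b\<in>S. h b \<noteq> 0 \<longrightarrow> h1 b = h2 b"
      using restr_eq by (metis (mono_tags, lifting) mem_Collect_eq restrict_apply')
    then show False
      using annihilator_enlarge_support[OF assms(1) _ h \<open>h1 \<in> ?W\<close> \<open>h2 \<in> ?W\<close> \<open>h1 \<noteq> h2\<close>]
        h_max assms(3) by (meson leD zero_less_one order.strict_trans)
  qed
qed

section \<open>Slice rank of diagonal functions\<close>

definition diagonal_mod :: "nat \<Rightarrow> nat \<Rightarrow> 'x set \<Rightarrow> ('x \<Rightarrow> int) \<Rightarrow> ((nat \<Rightarrow> 'x) \<Rightarrow> int) \<Rightarrow> bool" where
  "diagonal_mod p m S w T \<longleftrightarrow> (\<forall>a. (\<forall>j<m. a j \<in> S) \<longrightarrow>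
      [T a = (if \<forall>j<m. a j = a 0 then w (a 0) else 0)] (mod int p))"

text \<open>\<open>T\<close> has slice rank at most \<open>m |R|\<close> over \<open>\<int>/p\<close>: \<open>G j r\<close> ignores the \<open>j\<close>-th argument.\<close>
definition slice_decomp :: "nat \<Rightarrow> nat \<Rightarrow> 'r set \<Rightarrow> (nat \<Rightarrow> 'r \<Rightarrow> 'x \<Rightarrow> int) \<Rightarrow>
    (nat \<Rightarrow> 'r \<Rightarrow> (nat \<Rightarrow> 'x) \<Rightarrow> int) \<Rightarrow> ((nat \<Rightarrow> 'x) \<Rightarrow> int) \<Rightarrow> bool" where
  "slice_decomp p m R F G T \<longleftrightarrow> (\<forall>j<m. \<forall>r a b. G j r (a(j:=b)) = G j r a) \<and>
     (\<forall>a. [T a = (\<Sum>j<m. \<Sum>r\<in>R. F j r (a j) * G j r a)] (mod int p))"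

definition contract :: "nat \<Rightarrow> 'x set \<Rightarrow> ('x \<Rightarrow> int) \<Rightarrow> ((nat \<Rightarrow> 'x) \<Rightarrow> int) \<Rightarrow> (nat \<Rightarrow> 'x) \<Rightarrow> int" where
  "contract m S h T a = (\<Sum>b\<in>S. T (a(m:=b)) * h b)"

lemma diagonal_mod_subset: "diagonal_mod p m S w T \<Longrightarrow> S' \<subseteq> S \<Longrightarrow> diagonal_mod p m S' w T"
  unfolding diagonal_mod_def by blast

lemma diagonal_mod_contract:
  assumes "diagonal_mod p (Suc m) S w T" "0 < m" "finite S"
  shows "diagonal_mod p m S (\<lambda>s. w s * h s) (contract m S h T)"
  unfolding diagonal_mod_def
proof (intro allI impI)
  fix a assume a: "\<forall>j<m. a j \<in> S"
  define P where "P \<longleftrightarrow> (\<forall>j<m. a j = a 0)"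
  have "[T (a(m:=b)) * h b = (if b = a 0 then if P then w (a 0) * h b else 0 else 0)] (mod int p)"
    if "b \<in> S" for b
  proof -
    have "\<forall>j<Suc m. (a(m:=b)) j \<in> S" using a that by (auto simp: less_Suc_eq)
    then have "[T (a(m:=b)) = (if \<forall>j<Suc m. (a(m:=b)) j = (a(m:=b)) 0 then w ((a(m:=b)) 0) else 0)]
        (mod int p)"
      using assms(1) unfolding diagonal_mod_def by blast
    moreover have "(\<forall>j<Suc m. (a(m:=b)) j = (a(m:=b)) 0) \<longleftrightarrow> P \<and> b = a 0"
      using assms(2) unfolding P_def by (auto simp: less_Suc_eq)
    moreover have "(a(m:=b)) 0 = a 0" using assms(2) by simp
    ultimately have "[T (a(m:=b)) = (if P \<and> b = a 0 then w (a 0) else 0)] (mod int p)"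
      by (simp only:)
    then have "[T (a(m:=b)) * h b = (if P \<and> b = a 0 then w (a 0) else 0) * h b] (mod int p)"
      by (rule cong_mult[OF _ cong_refl])
    also have "(if P \<and> b = a 0 then w (a 0) else 0) * h b
        = (if b = a 0 then if P then w (a 0) * h b else 0 else 0)"
      by simp
    finally show ?thesis .
  qed
  then have "[contract m S h T a = (\<Sum>b\<in>S. if b = a 0 then if P then w (a 0) * h b else 0 else 0)]
      (mod int p)"
    unfolding contract_def by (rule cong_sum)
  also have "(\<Sum>b\<in>S. if b = a 0 then if P then w (a 0) * h b else 0 else 0)
      = (if P then w (a 0) * h (a 0) else 0)"
    using assms(2,3) a by (simp add: sum.delta)
  finally show
    "[contract m S h T a = (if \<forall>j<m. a j = a 0 then w (a 0) * h (a 0) else 0)] (mod int p)"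
    unfolding P_def .
qed

lemma slice_decomp_contract:
  assumes "slice_decomp p (Suc m) R F G T" "h \<in> annihilator p S R (F m)"
  shows "slice_decomp p m R F (\<lambda>j r. contract m S h (G j r)) (contract m S h T)"
proof -
  have indep: "G j r (a(j:=b)) = G j r a" if "j < Suc m" for j r a b
    using assms(1) that by (simp add: slice_decomp_def)
  have "contract m S h (G j r) (a(j:=b')) = contract m S h (G j r) a" if "j < m" for j r a b'
  proof -
    have "G j r ((a(j:=b'))(m:=b)) = G j r (a(m:=b))" for b
      using indep[of j r "a(m:=b)" b'] that by (simp add: fun_upd_twist)
    then show ?thesis by (simp add: contract_def)
  qed
  moreover have
    "[contract m S h T a = (\<Sum>j<m. \<Sum>r\<in>R. F j r (a j) * contract m S h (G j r) a)] (mod int p)"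
    for a
  proof -
    let ?rest = "\<lambda>b. \<Sum>j<m. \<Sum>r\<in>R. F j r (a j) * G j r (a(m:=b))"
    have "[T (a(m:=b)) = ?rest b + (\<Sum>r\<in>R. F m r b * G m r a)] (mod int p)" for b
    proof -
      have "[T (a(m:=b)) = (\<Sum>j<Suc m. \<Sum>r\<in>R. F j r ((a(m:=b)) j) * G j r (a(m:=b)))] (mod int p)"
        using assms(1) unfolding slice_decomp_def by blast
      also have "(\<Sum>j<Suc m. \<Sum>r\<in>R. F j r ((a(m:=b)) j) * G j r (a(m:=b)))
          = ?rest b + (\<Sum>r\<in>R. F m r b * G m r a)"
        using indep[of m] by simp
      finally show ?thesis .
    qed
    then have "[contract m S h T a = (\<Sum>b\<in>S. (?rest b + (\<Sum>r\<in>R. F m r b * G m r a)) * h b)]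
        (mod int p)"
      unfolding contract_def by (intro cong_sum cong_mult cong_refl)
    also have "(\<Sum>b\<in>S. (?rest b + (\<Sum>r\<in>R. F m r b * G m r a)) * h b)
        = (\<Sum>j<m. \<Sum>r\<in>R. F j r (a j) * contract m S h (G j r) a)
          + (\<Sum>r\<in>R. G m r a * (\<Sum>b\<in>S. F m r b * h b))"
      unfolding contract_def distrib_right sum.distrib sum_distrib_left sum_distrib_right
      by (subst (1 2) sum.swap, subst sum.swap) (simp add: mult_ac)
    also have "[\<dots> = (\<Sum>j<m. \<Sum>r\<in>R. F j r (a j) * contract m S h (G j r) a) + (\<Sum>r\<in>R. G m r a * 0)]
        (mod int p)"
      using assms(2) by (intro cong_add cong_sum cong_mult cong_refl) (auto simp: annihilator_def)
    finally show ?thesis by simp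
  qed
  ultimately show ?thesis by (simp add: slice_decomp_def)
qed

lemma diagonal_mod_one_slice:
  assumes "diagonal_mod p 1 S v T" "slice_decomp p 1 R F G T" "s \<in> S"
  shows "[v s = (\<Sum>r\<in>R. F 0 r s * G 0 r z)] (mod int p)"
proof -
  have diag: "[T (z(0:=s)) = v s] (mod int p)"
    using assms(1)[unfolded diagonal_mod_def, rule_format, of "z(0:=s)"] assms(3) by simp
  have "[T (z(0:=s)) = (\<Sum>r\<in>R. F 0 r s * G 0 r (z(0:=s)))] (mod int p)"
    using conjunct2[OF assms(2)[unfolded slice_decomp_def], rule_format, of "z(0:=s)"] by simp
  moreover have "G 0 r (z(0:=s)) = G 0 r z" for r
    using assms(2) by (simp add: slice_decomp_def)
  ultimately have "[T (z(0:=s)) = (\<Sum>r\<in>R. F 0 r s * G 0 r z)] (mod int p)"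
    by simp
  with diag show ?thesis by (rule cong_trans[OF cong_sym])
qed

text \<open>Contracting the second argument against \<open>h\<close> leaves \<open>s \<mapsto> w s * h s\<close> in the span of the
  \<open>F 0 r\<close>; as \<open>w\<close> is invertible mod \<open>p\<close>, \<open>h\<close> is determined by the \<open>|R|\<close> coefficients.\<close>
lemma card_annihilator_le_slice_rank_two:
  assumes "prime p" "finite S" "finite R" "\<forall>s\<in>S. \<not> int p dvd w s"
    and "diagonal_mod p 2 S w T" "slice_decomp p 2 R F G T"
  shows "card (annihilator p S R (F 1)) \<le> p ^ card R"
proof -
  have "p > 1" using assms(1) prime_gt_1_nat by blast
  let ?W = "annihilator p S R (F 1)"
  define coeffs where "coeffs h = restrict (\<lambda>r. contract 1 S h (G 0 r) undefined mod int p) R" for h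
  have span: "[w s * h s = (\<Sum>r\<in>R. F 0 r s * contract 1 S h (G 0 r) undefined)] (mod int p)"
    if "h \<in> ?W" "s \<in> S" for h s
  proof -
    have "diagonal_mod p 1 S (\<lambda>s. w s * h s) (contract 1 S h T)"
      using assms(2,5) by (intro diagonal_mod_contract) (simp_all add: numeral_2_eq_2)
    moreover have "slice_decomp p 1 R F (\<lambda>j r. contract 1 S h (G j r)) (contract 1 S h T)"
      using assms(6) that(1) by (intro slice_decomp_contract) (simp_all add: numeral_2_eq_2)
    ultimately show ?thesis using that(2) by (rule diagonal_mod_one_slice)
  qed
  have "inj_on coeffs ?W"
  proof (rule inj_onI)
    fix h g assume h: "h \<in> ?W" and g: "g \<in> ?W" and "coeffs h = coeffs g"
    have vec: "h \<in> S \<rightarrow>\<^sub>E {0..<int p}" "g \<in> S \<rightarrow>\<^sub>E {0..<int p}"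
      using h g by (simp_all add: annihilator_def)
    show "h = g"
    proof (rule PiE_ext[OF vec])
      fix s assume "s \<in> S"
      have "[contract 1 S h (G 0 r) undefined = contract 1 S g (G 0 r) undefined] (mod int p)"
        if "r \<in> R" for r
        using fun_cong[OF \<open>coeffs h = coeffs g\<close>, of r] that by (simp add: coeffs_def cong_def)
      then have "[(\<Sum>r\<in>R. F 0 r s * contract 1 S h (G 0 r) undefined)
          = (\<Sum>r\<in>R. F 0 r s * contract 1 S g (G 0 r) undefined)] (mod int p)"
        by (intro cong_sum cong_mult cong_refl)
      then have "[w s * h s = w s * g s] (mod int p)"
        using span[OF h \<open>s \<in> S\<close>] span[OF g \<open>s \<in> S\<close>] by (meson cong_sym cong_trans)
      then have "int p dvd w s * (h s - g s)"
        by (simp add: cong_iff_dvd_diff right_diff_distrib)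
      then have "[h s = g s] (mod int p)"
        using assms(1,4) \<open>s \<in> S\<close> by (simp add: prime_dvd_mult_iff cong_iff_dvd_diff)
      then show "h s = g s" by (rule residue_vectors_cong_imp_eq[OF vec \<open>s \<in> S\<close>])
    qed
  qed
  then have "card ?W \<le> card (R \<rightarrow>\<^sub>E {0..<int p})"
    by (rule card_inj_on_le) (use \<open>p > 1\<close> in \<open>auto simp: coeffs_def finite_PiE assms(3)\<close>)
  then show ?thesis using assms(3) by (simp add: card_PiE)
qed

lemma card_le_slice_rank_two:
  assumes "prime p" "finite S" "finite R" "\<forall>s\<in>S. \<not> int p dvd w s"
    and "diagonal_mod p 2 S w T" "slice_decomp p 2 R F G T"
  shows "card S \<le> 2 * card R"
proof -
  have "p > 1" using assms(1) prime_gt_1_nat by blast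
  then have "p ^ (card S - card R) \<le> card (annihilator p S R (F 1))"
    using assms(2,3) by (intro card_annihilator_ge) auto
  also have "\<dots> \<le> p ^ card R" by (rule card_annihilator_le_slice_rank_two[OF assms])
  finally show ?thesis using power_le_imp_le_exp[OF \<open>p > 1\<close>] by fastforce
qed

text \<open>Tao's slice rank bound: induction on \<open>m\<close>, contracting the last argument against a vector of
  the annihilator of the \<open>F m r\<close> with at least \<open>|S| - |R|\<close> nonzero entries.\<close>
theorem card_le_slice_rank:
  assumes "prime p" "2 \<le> m" "finite S" "finite R" "\<forall>s\<in>S. \<not> int p dvd w s"
    and "diagonal_mod p m S w T" "slice_decomp p m R F G T"
  shows "card S \<le> m * card R"
  using assms(2,3,5-7)
proof (induction m arbitrary: S w T G rule: nat_induct_at_least)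
  case base
  then show ?case using card_le_slice_rank_two assms(1,4) by blast
next
  case (Suc m)
  obtain h where h: "h \<in> annihilator p S R (F m)" and supp: "card S \<le> card {b\<in>S. h b \<noteq> 0} + card R"
    using annihilator_large_support[OF Suc.prems(1) assms(4)] prime_gt_1_nat[OF assms(1)] by blast
  let ?S' = "{b\<in>S. h b \<noteq> 0}"
  have "diagonal_mod p m ?S' (\<lambda>s. w s * h s) (contract m S h T)"
    using diagonal_mod_contract[OF Suc.prems(3)] Suc.hyps Suc.prems(1)
    by (auto intro: diagonal_mod_subset)
  moreover have "slice_decomp p m R F (\<lambda>j r. contract m S h (G j r)) (contract m S h T)"
    using Suc.prems(4) h by (rule slice_decomp_contract)
  moreover have "\<not> int p dvd w s * h s" if "s \<in> ?S'" for s
  proof -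
    have "0 \<le> h s" "h s < int p" using h that by (auto simp: annihilator_def)
    then have "\<not> int p dvd h s" using that by (auto dest: zdvd_imp_le)
    then show ?thesis using assms(1) Suc.prems(2) that by (simp add: prime_dvd_mult_iff)
  qed
  ultimately have "card ?S' \<le> m * card R" using Suc.prems(1) by (intro Suc.IH) auto
  with supp show ?case by simp
qed

section \<open>Polynomials on binary arrays\<close>

definition binary_array :: "nat \<Rightarrow> nat \<Rightarrow> (nat \<Rightarrow> nat \<Rightarrow> nat) \<Rightarrow> bool" where
  "binary_array p n a \<longleftrightarrow> (\<forall>j<p. \<forall>i<n. a j i \<le> 1)"

definition grid_monomial :: "(nat \<times> nat) set \<Rightarrow> (nat \<Rightarrow> nat \<Rightarrow> nat) \<Rightarrow> int" where
  "grid_monomial U a = (\<Prod>(j, i)\<in>U. int (a j i))"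

text \<open>On \<open>{0,1}\<close>-valued arrays \<open>x\<^sup>2 = x\<close>, so squarefree monomials in the \<open>a j i\<close> suffice.\<close>
inductive multilinear :: "nat \<Rightarrow> nat \<Rightarrow> nat \<Rightarrow> ((nat \<Rightarrow> nat \<Rightarrow> nat) \<Rightarrow> int) \<Rightarrow> bool"
  for p n D where
  monomial: "U \<subseteq> {..<p} \<times> {..<n} \<Longrightarrow> card U \<le> D \<Longrightarrow> multilinear p n D (\<lambda>a. c * grid_monomial U a)"
| zero: "multilinear p n D (\<lambda>a. 0)"
| add: "multilinear p n D f \<Longrightarrow> multilinear p n D g \<Longrightarrow> multilinear p n D (\<lambda>a. f a + g a)"

definition binary_deg_le :: "nat \<Rightarrow> nat \<Rightarrow> nat \<Rightarrow> ((nat \<Rightarrow> nat \<Rightarrow> nat) \<Rightarrow> int) \<Rightarrow> bool" where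
  "binary_deg_le p n D f \<longleftrightarrow> (\<exists>g. multilinear p n D g \<and> (\<forall>a. binary_array p n a \<longrightarrow> f a = g a))"

lemma grid_monomial_binary:
  assumes "U \<subseteq> {..<p} \<times> {..<n}" "binary_array p n a"
  shows "grid_monomial U a = (if \<forall>(j, i)\<in>U. a j i = 1 then 1 else 0)"
proof (cases "\<forall>(j, i)\<in>U. a j i = 1")
  case True
  then show ?thesis unfolding grid_monomial_def by (auto intro!: prod.neutral)
next
  case False
  then obtain j i where ji: "(j, i) \<in> U" "a j i \<noteq> 1" by blast
  then have "a j i = 0" using assms unfolding binary_array_def by fastforce
  then have "grid_monomial U a = 0"
    unfolding grid_monomial_def using ji(1) finite_subset[OF assms(1)]
    by (intro prod_zero) (auto intro!: bexI[of _ "(j, i)"])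
  then show ?thesis using False by simp
qed

lemma grid_monomial_Un:
  assumes "U \<subseteq> {..<p} \<times> {..<n}" "V \<subseteq> {..<p} \<times> {..<n}" "binary_array p n a"
  shows "grid_monomial U a * grid_monomial V a = grid_monomial (U \<union> V) a"
  using assms grid_monomial_binary[OF assms(1,3)] grid_monomial_binary[OF assms(2,3)]
    grid_monomial_binary[of "U \<union> V" p n a] by auto

lemma multilinear_mono: "multilinear p n D f \<Longrightarrow> D \<le> D' \<Longrightarrow> multilinear p n D' f"
  by (induction rule: multilinear.induct) (auto intro: multilinear.intros)

lemma multilinear_scale: "multilinear p n D f \<Longrightarrow> multilinear p n D (\<lambda>a. c * f a)"
proof (induction rule: multilinear.induct)
  case (monomial U c')
  then show ?case using multilinear.monomial[of U p n D "c * c'"] by (simp add: mult.assoc)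
next
  case zero
  then show ?case by (simp add: multilinear.zero)
next
  case (add f g)
  then show ?case using multilinear.add[OF add.IH] by (simp add: distrib_left)
qed

lemma binary_deg_leI:
  "multilinear p n D g \<Longrightarrow> (\<And>a. binary_array p n a \<Longrightarrow> f a = g a) \<Longrightarrow> binary_deg_le p n D f"
  unfolding binary_deg_le_def by blast

lemma binary_deg_le_monomial:
  "U \<subseteq> {..<p} \<times> {..<n} \<Longrightarrow> card U \<le> D \<Longrightarrow> binary_deg_le p n D (\<lambda>a. c * grid_monomial U a)"
  by (blast intro: binary_deg_leI multilinear.monomial)

lemma binary_deg_le_const: "binary_deg_le p n D (\<lambda>a. c)"
  using binary_deg_le_monomial[of "{}" p n D c] by (simp add: grid_monomial_def)

lemma binary_deg_le_var: "j < p \<Longrightarrow> i < n \<Longrightarrow> binary_deg_le p n 1 (\<lambda>a. int (a j i))"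
  using binary_deg_le_monomial[of "{(j, i)}" p n 1 1] by (simp add: grid_monomial_def)

lemma binary_deg_le_add:
  assumes "binary_deg_le p n D f" "binary_deg_le p n D g"
  shows "binary_deg_le p n D (\<lambda>a. f a + g a)"
proof -
  obtain f' g' where "multilinear p n D f'" "multilinear p n D g'"
    and "\<forall>a. binary_array p n a \<longrightarrow> f a = f' a \<and> g a = g' a"
    using assms unfolding binary_deg_le_def by blast
  then show ?thesis by (intro binary_deg_leI[OF multilinear.add]) auto
qed

lemma binary_deg_le_scale:
  assumes "binary_deg_le p n D f"
  shows "binary_deg_le p n D (\<lambda>a. c * f a)"
proof -
  obtain f' where "multilinear p n D f'" "\<forall>a. binary_array p n a \<longrightarrow> f a = f' a"
    using assms unfolding binary_deg_le_def by blast
  then show ?thesis by (intro binary_deg_leI[OF multilinear_scale]) auto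
qed

lemma binary_deg_le_mono: "binary_deg_le p n D f \<Longrightarrow> D \<le> D' \<Longrightarrow> binary_deg_le p n D' f"
  unfolding binary_deg_le_def by (fastforce intro: multilinear_mono)

lemma binary_deg_le_mult_multilinear:
  assumes "multilinear p n D1 f" "multilinear p n D2 g"
  shows "binary_deg_le p n (D1 + D2) (\<lambda>a. f a * g a)"
  using assms(1)
proof (induction rule: multilinear.induct)
  case (monomial U c)
  show ?case using assms(2)
  proof (induction rule: multilinear.induct)
    case (monomial V c')
    have "card (U \<union> V) \<le> D1 + D2"
      using card_Un_le[of U V] \<open>card U \<le> D1\<close> \<open>card V \<le> D2\<close> by simp
    with \<open>U \<subseteq> _\<close> \<open>V \<subseteq> _\<close> show ?case
      by (intro binary_deg_leI[OF multilinear.monomial[of "U \<union> V" p n _ "c * c'"]])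
        (auto simp flip: grid_monomial_Un[of U p n V] simp: mult_ac)
  next
    case zero
    then show ?case by (simp add: binary_deg_le_const)
  next
    case (add g1 g2)
    then show ?case using binary_deg_le_add[OF add.IH] by (simp add: distrib_left)
  qed
next
  case zero
  then show ?case by (simp add: binary_deg_le_const)
next
  case (add f1 f2)
  then show ?case using binary_deg_le_add[OF add.IH] by (simp add: distrib_right)
qed

lemma binary_deg_le_mult:
  assumes "binary_deg_le p n D1 f" "binary_deg_le p n D2 g"
  shows "binary_deg_le p n (D1 + D2) (\<lambda>a. f a * g a)"
proof -
  obtain f' g' where "multilinear p n D1 f'" "multilinear p n D2 g'"
    and "\<forall>a. binary_array p n a \<longrightarrow> f a = f' a \<and> g a = g' a"
    using assms unfolding binary_deg_le_def by blast
  then show ?thesis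
    using binary_deg_le_mult_multilinear unfolding binary_deg_le_def by fastforce
qed

lemma binary_deg_le_sum:
  "finite I \<Longrightarrow> (\<And>i. i \<in> I \<Longrightarrow> binary_deg_le p n D (f i)) \<Longrightarrow> binary_deg_le p n D (\<lambda>a. \<Sum>i\<in>I. f i a)"
proof (induction I rule: finite_induct)
  case empty
  then show ?case by (simp add: binary_deg_le_const)
next
  case (insert x I)
  then show ?case using binary_deg_le_add[of p n D "f x"] by simp
qed

lemma binary_deg_le_prod:
  "finite I \<Longrightarrow> (\<And>i. i \<in> I \<Longrightarrow> binary_deg_le p n (D i) (f i)) \<Longrightarrow>
    binary_deg_le p n (\<Sum>i\<in>I. D i) (\<lambda>a. \<Prod>i\<in>I. f i a)"
proof (induction I rule: finite_induct)
  case empty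
  then show ?case by (simp add: binary_deg_le_const)
next
  case (insert x I)
  then show ?case using binary_deg_le_mult[of p n "D x" "f x"] by simp
qed

lemma binary_deg_le_power: "binary_deg_le p n D f \<Longrightarrow> binary_deg_le p n (k * D) (\<lambda>a. f a ^ k)"
  using binary_deg_le_prod[of "{..<k}" p n "\<lambda>_. D" "\<lambda>_. f"] by simp

definition small_subsets :: "nat \<Rightarrow> nat \<Rightarrow> nat set set" where
  "small_subsets n k = {S. S \<subseteq> {..<n} \<and> card S \<le> k}"

definition subset_monomial :: "nat set \<Rightarrow> (nat \<Rightarrow> nat) \<Rightarrow> int" where
  "subset_monomial S x = (\<Prod>i\<in>S. int (x i))"

lemma finite_small_subsets: "finite (small_subsets n k)"
  by (rule finite_subset[of _ "Pow {..<n}"]) (auto simp: small_subsets_def)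

lemma exists_sparse_row:
  assumes "U \<subseteq> {..<p} \<times> {..<n}" "card U < p * Suc k"
  obtains j where "j < p" "{i. (j, i) \<in> U} \<in> small_subsets n k"
proof -
  let ?row = "\<lambda>j. {i. (j, i) \<in> U}"
  have rows: "U = Sigma {..<p} ?row" and "finite (?row j)" for j
    using assms(1) by (auto intro: finite_subset[of _ "{..<n}"])
  have "\<exists>j<p. card (?row j) \<le> k"
  proof (rule ccontr)
    assume "\<not> ?thesis"
    then have "(\<Sum>j<p. Suc k) \<le> (\<Sum>j<p. card (?row j))" by (intro sum_mono) auto
    also have "\<dots> = card U" by (subst rows) (simp add: card_SigmaI \<open>\<And>j. finite (?row j)\<close>)
    finally show False using assms(2) by simp
  qed
  then show ?thesis using that assms(1) by (auto simp: small_subsets_def)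
qed

lemma grid_monomial_split_row:
  assumes "finite U"
  shows "grid_monomial U a
    = subset_monomial {i. (j, i) \<in> U} (a j) * grid_monomial (U - {j} \<times> UNIV) a"
proof -
  have "U \<inter> {j} \<times> UNIV = Pair j ` {i. (j, i) \<in> U}" by auto
  then have row: "(\<Prod>(j', i)\<in>U \<inter> {j} \<times> UNIV. int (a j' i)) = subset_monomial {i. (j, i) \<in> U} (a j)"
    by (simp add: subset_monomial_def prod.reindex inj_on_def)
  show ?thesis
    unfolding grid_monomial_def
    by (subst prod.Int_Diff[OF assms, of _ "{j} \<times> UNIV"]) (simp only: row)
qed

lemma grid_monomial_avoid_row:
  "grid_monomial (U - {j} \<times> UNIV) (a(j:=b)) = grid_monomial (U - {j} \<times> UNIV) a"
  unfolding grid_monomial_def by (intro prod.cong) (auto split: if_splits)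

text \<open>A multilinear monomial of degree \<open>< p (k + 1)\<close> in the \<open>p\<close> rows \<open>a j\<close> has at most \<open>k\<close>
  variables in some row (pigeonhole); that row gives the slice.\<close>
lemma multilinear_slice_decomp:
  assumes "multilinear p n D g" "D < p * Suc k"
  shows "\<exists>G. slice_decomp q p (small_subsets n k) (\<lambda>_. subset_monomial) G g"
  using assms(1)
proof (induction rule: multilinear.induct)
  case (monomial U c)
  then obtain j where "j < p" and row: "{i. (j, i) \<in> U} \<in> small_subsets n k"
    using exists_sparse_row[of U p n k] assms(2) by force
  let ?row = "{i. (j, i) \<in> U}" and ?V = "U - {j} \<times> UNIV"
  define G where "G j' S a = (if j' = j \<and> S = ?row then c * grid_monomial ?V a else 0)" for j' S a
  have "G j' S (a(j':=b)) = G j' S a" for j' S a b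
    by (simp add: G_def grid_monomial_avoid_row)
  moreover have
    "(\<Sum>j'<p. \<Sum>S\<in>small_subsets n k. subset_monomial S (a j') * G j' S a) = c * grid_monomial U a"
    for a
  proof -
    have "(\<Sum>S\<in>small_subsets n k. subset_monomial S (a j') * G j' S a)
        = (if j' = j then \<Sum>S\<in>small_subsets n k.
             if S = ?row then subset_monomial ?row (a j) * (c * grid_monomial ?V a) else 0 else 0)"
      for j'
      by (auto simp: G_def intro: sum.cong)
    then have "(\<Sum>S\<in>small_subsets n k. subset_monomial S (a j') * G j' S a)
        = (if j' = j then subset_monomial ?row (a j) * (c * grid_monomial ?V a) else 0)" for j'
      using row by (simp add: finite_small_subsets)
    moreover have "finite U" using monomial.hyps(1) finite_subset by blast
    ultimately show ?thesis using \<open>j < p\<close> by (simp add: grid_monomial_split_row[of U a j])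
  qed
  ultimately show ?case by (intro exI[of _ G]) (simp add: slice_decomp_def)
next
  case zero
  then show ?case by (intro exI[of _ "\<lambda>_ _ _. 0"]) (simp add: slice_decomp_def)
next
  case (add f g)
  then obtain G1 G2 where "slice_decomp q p (small_subsets n k) (\<lambda>_. subset_monomial) G1 f"
    and "slice_decomp q p (small_subsets n k) (\<lambda>_. subset_monomial) G2 g" by blast
  then show ?case
    by (intro exI[of _ "\<lambda>j S a. G1 j S a + G2 j S a"])
      (auto simp: slice_decomp_def distrib_left sum.distrib intro: cong_add)
qed

section \<open>Interpolation on \<open>\<bbbF>\<^sub>p\<^sup>n\<close>\<close>

definition box :: "nat \<Rightarrow> nat \<Rightarrow> (nat \<Rightarrow> nat) set" where
  "box n N = {e. (\<forall>i<n. e i \<le> N) \<and> (\<forall>i\<ge>n. e i = 0)}"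

lemma bij_betw_PiE_box: "bij_betw (\<lambda>g i. if i < n then g i else 0) ({..<n} \<rightarrow>\<^sub>E {..N}) (box n N)"
proof (rule bij_betw_byWitness[where f' = "\<lambda>e. restrict e {..<n}"])
  show "\<forall>g\<in>{..<n} \<rightarrow>\<^sub>E {..N}. restrict (\<lambda>i. if i < n then g i else 0) {..<n} = g"
    by (auto simp: fun_eq_iff PiE_def extensional_def)
  show "\<forall>e\<in>box n N. (\<lambda>i. if i < n then restrict e {..<n} i else 0) = e"
    by (auto simp: fun_eq_iff box_def)
  show "(\<lambda>g i. if i < n then g i else 0) ` ({..<n} \<rightarrow>\<^sub>E {..N}) \<subseteq> box n N"
    by (auto simp: box_def PiE_def Pi_def)
  show "(\<lambda>e. restrict e {..<n}) ` box n N \<subseteq> {..<n} \<rightarrow>\<^sub>E {..N}"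
    by (rule image_subsetI) (simp add: box_def restrict_PiE_iff)
qed

lemma finite_box: "finite (box n N)"
  using bij_betw_finite[OF bij_betw_PiE_box] by (simp add: finite_PiE)

lemma sum_box_prod:
  fixes g :: "nat \<Rightarrow> nat \<Rightarrow> 'a::comm_semiring_1"
  shows "(\<Sum>e\<in>box n N. \<Prod>i<n. g i (e i)) = (\<Prod>i<n. \<Sum>k\<le>N. g i k)"
proof -
  have "(\<Prod>i<n. \<Sum>k\<le>N. g i k) = (\<Sum>h\<in>{..<n} \<rightarrow>\<^sub>E {..N}. \<Prod>i<n. g i (h i))"
    by (rule prod_sum_PiE) auto
  also have "\<dots> = (\<Sum>h\<in>{..<n} \<rightarrow>\<^sub>E {..N}. \<Prod>i<n. g i (if i < n then h i else 0))"
    by (intro sum.cong refl prod.cong) auto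
  also have "\<dots> = (\<Sum>e\<in>box n N. \<Prod>i<n. g i (e i))"
    by (rule sum.reindex_bij_betw[OF bij_betw_PiE_box])
  finally show ?thesis by simp
qed

lemma monomials_subset_box: "monomials k p n \<subseteq> box n (p - 1)"
  by (auto simp: monomials_def box_def)

lemma monomials_full_degree: "monomials (n * (p - 1)) p n = box n (p - 1)"
proof
  show "box n (p - 1) \<subseteq> monomials (n * (p - 1)) p n"
  proof
    fix e assume e: "e \<in> box n (p - 1)"
    then have "(\<Sum>i<n. e i) \<le> (\<Sum>i<n. p - 1)" by (intro sum_mono) (auto simp: box_def)
    then show "e \<in> monomials (n * (p - 1)) p n" using e by (auto simp: monomials_def box_def)
  qed
qed (rule monomials_subset_box)

text \<open>Coefficients of the polynomial \<open>1 - (y - t)\<^bsup>p - 1\<^esup>\<close>, written as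
  \<open>1 + (p - 1) (y + (p - t))\<^bsup>p - 1\<^esup>\<close> to stay in \<open>nat\<close>; by Fermat it is the indicator of \<open>y = t\<close>
  on \<open>\<int>/p\<close>.\<close>
definition delta_coeff :: "nat \<Rightarrow> nat \<Rightarrow> nat \<Rightarrow> nat" where
  "delta_coeff p t k = of_bool (k = 0) + (p - 1) * ((p - 1) choose k) * (p - t) ^ (p - 1 - k)"

lemma delta_poly_mod:
  assumes "prime p" "t < p" "y < p"
  shows "(\<Sum>k\<le>p - 1. delta_coeff p t k * y ^ k) mod p = of_bool (y = t)"
proof -
  have "p > 1" using assms(1) prime_gt_1_nat by blast
  have "(\<Sum>k\<le>p - 1. delta_coeff p t k * y ^ k)
      = 1 + (p - 1) * (\<Sum>k\<le>p - 1. ((p - 1) choose k) * y ^ k * (p - t) ^ (p - 1 - k))"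
    by (simp add: delta_coeff_def algebra_simps sum.distrib sum_distrib_left)
  also have "\<dots> = 1 + (p - 1) * (y + (p - t)) ^ (p - 1)"
    by (simp add: binomial_ring)
  finally have eq: "(\<Sum>k\<le>p - 1. delta_coeff p t k * y ^ k) = 1 + (p - 1) * (y + (p - t)) ^ (p - 1)" .
  show ?thesis
  proof (cases "y = t")
    case True
    then have "[(y + (p - t)) ^ (p - 1) = 0] (mod p)"
      using assms(2) \<open>p > 1\<close> by (simp add: cong_0_iff dvd_power)
    then have "[1 + (p - 1) * (y + (p - t)) ^ (p - 1) = 1 + (p - 1) * 0] (mod p)"
      by (intro cong_add cong_mult cong_refl)
    then show ?thesis using eq True \<open>p > 1\<close> by (simp add: cong_def)
  next
    case False
    have "\<not> p dvd y + (p - t)"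
    proof
      assume "p dvd y + (p - t)"
      then obtain q where q: "y + (p - t) = p * q" ..
      have "0 < q" using q assms(2) by (cases q) auto
      moreover have "p * q < p * 2" using q assms(3) by linarith
      then have "q < 2" by simp
      ultimately show False using q False assms(2) by (simp add: numeral_2_eq_2 less_Suc_eq)
    qed
    then have "[(y + (p - t)) ^ (p - 1) = 1] (mod p)" by (rule fermat_theorem[OF assms(1)])
    then have "[1 + (p - 1) * (y + (p - t)) ^ (p - 1) = 1 + (p - 1) * 1] (mod p)"
      by (intro cong_add cong_mult cong_refl)
    then show ?thesis using eq False \<open>p > 1\<close> by (simp add: cong_def)
  qed
qed

lemma Fpn_subset_box: "Fpn p n \<subseteq> box n p"
  by (auto simp: Fpn_def box_def less_imp_le)

lemma indicator_poly_mod: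
  assumes "prime p" "x \<in> Fpn p n" "b \<in> Fpn p n"
  shows "(\<Sum>e\<in>box n (p - 1). (\<Prod>i<n. delta_coeff p (b i) (e i)) * (\<Prod>i<n. x i ^ e i)) mod p
    = of_bool (x = b)"
proof -
  have "(\<Sum>e\<in>box n (p - 1). (\<Prod>i<n. delta_coeff p (b i) (e i)) * (\<Prod>i<n. x i ^ e i))
      = (\<Prod>i<n. \<Sum>k\<le>p - 1. delta_coeff p (b i) k * x i ^ k)"
    using sum_box_prod[of "\<lambda>i k. delta_coeff p (b i) k * x i ^ k" n "p - 1"]
    by (simp add: prod.distrib)
  also have "[\<dots> = (\<Prod>i<n. of_bool (x i = b i))] (mod p)"
  proof (rule cong_prod)
    fix i assume "i \<in> {..<n}"
    then have "b i < p" "x i < p" using assms(2,3) by (auto simp: Fpn_def)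
    then show "[(\<Sum>k\<le>p - 1. delta_coeff p (b i) k * x i ^ k) = of_bool (x i = b i)] (mod p)"
      using delta_poly_mod[OF assms(1)] prime_gt_1_nat[OF assms(1)] by (simp add: cong_def)
  qed
  also have "(\<Prod>i<n. of_bool (x i = b i)) = (of_bool (x = b) :: nat)"
    using assms(2,3) by (auto simp: Fpn_def fun_eq_iff) (metis lessThan_iff not_le)
  finally show ?thesis using prime_gt_1_nat[OF assms(1)] by (simp add: cong_def)
qed

text \<open>Lagrange interpolation: \<open>\<Sum>\<^sub>b f b \<Prod>\<^sub>i \<delta>\<^bsub>b i\<^esub> (x i)\<close>.\<close>
lemma interpolates_Fpn:
  assumes "prime p" "B \<subseteq> Fpn p n"
  shows "interpolates (n * (p - 1)) p n B"
  unfolding interpolates_def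
proof (intro allI impI)
  fix f :: "(nat \<Rightarrow> nat) \<Rightarrow> nat" assume f: "\<forall>x\<in>B. f x < p"
  have "finite B" using assms(2) Fpn_subset_box finite_box finite_subset by metis
  define c where "c e = (\<Sum>b\<in>B. f b * (\<Prod>i<n. delta_coeff p (b i) (e i)))" for e
  have "f x = eval_poly (n * (p - 1)) p n c x" if "x \<in> B" for x
  proof -
    have "(\<Sum>e\<in>box n (p - 1). c e * (\<Prod>i<n. x i ^ e i))
        = (\<Sum>b\<in>B. f b * (\<Sum>e\<in>box n (p - 1). (\<Prod>i<n. delta_coeff p (b i) (e i)) * (\<Prod>i<n. x i ^ e i)))"
      unfolding c_def sum_distrib_right sum_distrib_left mult.assoc by (rule sum.swap)
    also have "[\<dots> = (\<Sum>b\<in>B. f b * of_bool (x = b))] (mod p)"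
    proof (intro cong_sum cong_mult cong_refl)
      fix b assume "b \<in> B"
      then show "[(\<Sum>e\<in>box n (p - 1). (\<Prod>i<n. delta_coeff p (b i) (e i)) * (\<Prod>i<n. x i ^ e i))
          = of_bool (x = b)] (mod p)"
        using indicator_poly_mod[OF assms(1), of x n b] assms(2) that prime_gt_1_nat[OF assms(1)]
        by (auto simp: cong_def subsetD)
    qed
    also have "(\<Sum>b\<in>B. f b * of_bool (x = b)) = f x"
      using \<open>finite B\<close> that by simp
    finally show ?thesis
      using f that unfolding eval_poly_def monomials_full_degree by (simp add: cong_def)
  qed
  then show "\<exists>c. \<forall>x\<in>B. f x = eval_poly (n * (p - 1)) p n c x" by blast
qed

lemma interpolates_mono:
  assumes "interpolates d p n B" "d \<le> d'"
  shows "interpolates d' p n B"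
  unfolding interpolates_def
proof (intro allI impI)
  fix f :: "(nat \<Rightarrow> nat) \<Rightarrow> nat" assume "\<forall>x\<in>B. f x < p"
  then obtain c where c: "\<forall>x\<in>B. f x = eval_poly d p n c x"
    using assms(1) unfolding interpolates_def by blast
  have sub: "monomials d p n \<subseteq> monomials d' p n"
    using assms(2) by (auto simp: monomials_def)
  have "eval_poly d' p n (\<lambda>e. if e \<in> monomials d p n then c e else 0) x = eval_poly d p n c x" for x
    unfolding eval_poly_def
    by (subst sum.mono_neutral_cong_right[OF finite_subset[OF monomials_subset_box finite_box] sub])
      auto
  then show "\<exists>c. \<forall>x\<in>B. f x = eval_poly d' p n c x" using c by metis
qed

section \<open>Sumsets of binary vectors\<close>

lemma sum_binary_mod_eq_0_iff:
  fixes v :: "nat \<Rightarrow> nat"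
  assumes "p > 0" "\<forall>j<p. v j \<le> 1"
  shows "(\<Sum>j<p. v j) mod p = 0 \<longleftrightarrow> (\<forall>j<p. v j = v 0)"
proof
  assume "(\<Sum>j<p. v j) mod p = 0"
  moreover have "(\<Sum>j<p. v j) \<le> p"
    using sum_bounded_above[of "{..<p}" v 1] assms(2) by simp
  ultimately have "(\<Sum>j<p. v j) = 0 \<or> (\<Sum>j<p. v j) = p"
    by (metis dvd_imp_le le_antisym mod_0_imp_dvd not_gr0)
  then show "\<forall>j<p. v j = v 0"
  proof
    assume "(\<Sum>j<p. v j) = p"
    moreover have "(\<Sum>j<p. 1 - v j) = (\<Sum>j<p. 1) - (\<Sum>j<p. v j)"
      using assms(2) by (intro sum_subtractf_nat) auto
    ultimately have "(\<Sum>j<p. 1 - v j) = 0" by simp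
    then have "\<forall>j<p. v j = 1" using assms(2) by (auto intro: le_antisym)
    then show ?thesis using assms(1) by simp
  qed (use assms(1) in simp)
next
  assume const: "\<forall>j<p. v j = v 0"
  have "(\<Sum>j<p. v j) = (\<Sum>j<p. v 0)"
    by (rule sum.cong[OF refl]) (use const in \<open>metis lessThan_iff\<close>)
  then show "(\<Sum>j<p. v j) mod p = 0" by simp
qed

lemma kfold_sum_eq_0_iff_constant:
  assumes "p > 0" "\<forall>j<p. a j \<in> cube n"
  shows "(\<lambda>i. (\<Sum>j<p. a j i) mod p) = (\<lambda>_. 0) \<longleftrightarrow> (\<forall>j<p. a j = a 0)"
proof -
  have "\<forall>j<p. a j i \<le> 1" for i
    using assms(2) by (cases "i < n") (auto simp: cube_def)
  then have "(\<lambda>i. (\<Sum>j<p. a j i) mod p) = (\<lambda>_. 0) \<longleftrightarrow> (\<forall>i. \<forall>j<p. a j i = a 0 i)"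
    using sum_binary_mod_eq_0_iff[OF assms(1)] by (simp add: fun_eq_iff)
  also have "\<dots> \<longleftrightarrow> (\<forall>j<p. a j = a 0)" unfolding fun_eq_iff by blast
  finally show ?thesis .
qed

lemma cube_subset_Fpn: "1 < p \<Longrightarrow> cube n \<subseteq> Fpn p n"
  by (auto simp: cube_def Fpn_def le_less_trans)

lemma kfold_sumset_subset_Fpn:
  assumes "A \<subseteq> Fpn p n" "p > 0"
  shows "kfold_sumset p k A \<subseteq> Fpn p n"
proof
  fix x assume "x \<in> kfold_sumset p k A"
  then obtain a where x: "x = (\<lambda>i. (\<Sum>j<k. a j i) mod p)" and a: "\<forall>j<k. a j \<in> A"
    by (auto simp: kfold_sumset_def)
  have "a j i = 0" if "j < k" "n \<le> i" for j i
    using a assms(1) that unfolding Fpn_def by blast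
  then show "x \<in> Fpn p n" using assms(2) by (simp add: x Fpn_def)
qed

lemma card_small_subsets_le:
  assumes "p \<ge> 2"
  shows "card (small_subsets n k) \<le> card (monomials k p n)"
proof (rule card_inj_on_le)
  show "inj_on (\<lambda>S i. of_bool (i \<in> S)) (small_subsets n k)"
    by (rule inj_onI) (metis (mono_tags) of_bool_eq_iff subsetI equalityI)
  have "(\<Sum>i<n. of_bool (i \<in> S)) = card S" if "S \<subseteq> {..<n}" for S
    using that by (simp add: Int_absorb1)
  then show "(\<lambda>S i. of_bool (i \<in> S)) ` small_subsets n k \<subseteq> monomials k p n"
    using assms by (auto simp: small_subsets_def monomials_def)
  show "finite (monomials k p n)" using monomials_subset_box finite_box by (rule finite_subset)
qed

lemma eval_poly_kfold_sum_cong: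
  "[int (eval_poly d p n c (\<lambda>i. (\<Sum>j<k. a j i) mod p))
     = (\<Sum>e\<in>monomials d p n. int (c e) * (\<Prod>i<n. (\<Sum>j<k. int (a j i)) ^ e i))] (mod int p)"
proof -
  have "[eval_poly d p n c (\<lambda>i. (\<Sum>j<k. a j i) mod p)
      = (\<Sum>e\<in>monomials d p n. c e * (\<Prod>i<n. (\<Sum>j<k. a j i) ^ e i))] (mod p)"
    unfolding eval_poly_def cong_mod_left
    by (intro cong_sum cong_mult cong_refl cong_prod cong_pow) (simp add: cong_def)
  then show ?thesis by (simp flip: cong_int_iff)
qed

lemma binary_deg_le_lifted_poly:
  "binary_deg_le p n d (\<lambda>a. \<Sum>e\<in>monomials d p n. int (c e) * (\<Prod>i<n. (\<Sum>j<p. int (a j i)) ^ e i))"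
proof (intro binary_deg_le_sum binary_deg_le_scale)
  show "finite (monomials d p n)" using monomials_subset_box finite_box by (rule finite_subset)
next
  fix e assume e: "e \<in> monomials d p n"
  have "binary_deg_le p n (\<Sum>i<n. e i * 1) (\<lambda>a. \<Prod>i<n. (\<Sum>j<p. int (a j i)) ^ e i)"
    by (intro binary_deg_le_prod binary_deg_le_power binary_deg_le_sum binary_deg_le_var) auto
  moreover have "(\<Sum>i<n. e i * 1) \<le> d" using e by (simp add: monomials_def)
  ultimately show "binary_deg_le p n d (\<lambda>a. \<Prod>i<n. (\<Sum>j<p. int (a j i)) ^ e i)"
    by (rule binary_deg_le_mono)
qed

lemma diagonal_mod_cong:
  "diagonal_mod p m S w T \<Longrightarrow> (\<And>a. \<forall>j<m. a j \<in> S \<Longrightarrow> T a = T' a) \<Longrightarrow> diagonal_mod p m S w T'"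
  unfolding diagonal_mod_def by simp

text \<open>Lifting the indicator of \<open>0\<close> on \<open>p\<cdot>A\<close> along the addition map gives a diagonal function on
  \<open>A\<^sup>p\<close>: \<open>p\<close> binary vectors sum to \<open>0\<close> mod \<open>p\<close> only if they are all equal.\<close>
lemma diagonal_mod_lifted_zero_indicator:
  assumes "p > 1" "A \<subseteq> cube n"
    and c: "\<forall>x\<in>kfold_sumset p p A. of_bool (x = (\<lambda>_. 0)) = eval_poly d p n c x"
  shows "diagonal_mod p p A (\<lambda>_. 1)
    (\<lambda>a. \<Sum>e\<in>monomials d p n. int (c e) * (\<Prod>i<n. (\<Sum>j<p. int (a j i)) ^ e i))"
  unfolding diagonal_mod_def
proof (intro allI impI)
  fix a :: "nat \<Rightarrow> nat \<Rightarrow> nat" assume a: "\<forall>j<p. a j \<in> A"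
  let ?x = "\<lambda>i. (\<Sum>j<p. a j i) mod p"
  have "?x \<in> kfold_sumset p p A" using a by (auto simp: kfold_sumset_def)
  then have eq: "eval_poly d p n c ?x = of_bool (?x = (\<lambda>_. 0))" using c by simp
  have "[(\<Sum>e\<in>monomials d p n. int (c e) * (\<Prod>i<n. (\<Sum>j<p. int (a j i)) ^ e i))
      = of_bool (?x = (\<lambda>_. 0))] (mod int p)"
    using cong_sym[OF eval_poly_kfold_sum_cong[where p = p and k = p and a = a and d = d and n = n
          and c = c]]
    by (simp only: eq of_nat_of_bool)
  moreover have "?x = (\<lambda>_. 0) \<longleftrightarrow> (\<forall>j<p. a j = a 0)"
    using a assms(2) \<open>p > 1\<close> by (intro kfold_sum_eq_0_iff_constant) auto
  ultimately show "[(\<Sum>e\<in>monomials d p n. int (c e) * (\<Prod>i<n. (\<Sum>j<p. int (a j i)) ^ e i))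
      = (if \<forall>j<p. a j = a 0 then 1 else 0)] (mod int p)"
    by (simp only: of_bool_def)
qed

lemma card_le_of_interpolates_kfold_sumset:
  assumes "prime p" "A \<subseteq> cube n" "interpolates d p n (kfold_sumset p p A)"
  shows "card A \<le> p * card (small_subsets n (d div p))"
proof -
  have "p > 1" using assms(1) prime_gt_1_nat by blast
  have "\<forall>x\<in>kfold_sumset p p A. of_bool (x = (\<lambda>_. 0)) < p" using \<open>p > 1\<close> by simp
  then obtain c where c: "\<forall>x\<in>kfold_sumset p p A. of_bool (x = (\<lambda>_. 0)) = eval_poly d p n c x"
    using assms(3)[unfolded interpolates_def, THEN spec, of "\<lambda>x. of_bool (x = (\<lambda>_. 0))"] by blast
  obtain g where "multilinear p n d g" and g: "\<forall>a. binary_array p n a \<longrightarrow>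
      (\<Sum>e\<in>monomials d p n. int (c e) * (\<Prod>i<n. (\<Sum>j<p. int (a j i)) ^ e i)) = g a"
    using binary_deg_le_lifted_poly[of p n d c] unfolding binary_deg_le_def by blast
  moreover have "d < p * Suc (d div p)"
    using mult_div_mod_eq[of p d] mod_less_divisor[of p d] \<open>p > 1\<close>
    unfolding mult_Suc_right by linarith
  ultimately obtain G where "slice_decomp p p (small_subsets n (d div p)) (\<lambda>_. subset_monomial) G g"
    using multilinear_slice_decomp by blast
  moreover have "diagonal_mod p p A (\<lambda>_. 1) g"
    using diagonal_mod_lifted_zero_indicator[OF \<open>p > 1\<close> assms(2) c] g assms(2)
    by (elim diagonal_mod_cong) (auto simp: binary_array_def cube_def)
  moreover have "finite A"
    using assms(2) cube_subset_Fpn[OF \<open>p > 1\<close>] Fpn_subset_box finite_box finite_subset by metis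
  ultimately show ?thesis
    using card_le_slice_rank[OF assms(1), of p A "small_subsets n (d div p)" "\<lambda>_. 1"]
      prime_ge_2_nat[OF assms(1)] \<open>p > 1\<close> by (simp add: finite_small_subsets)
qed

theorem theorem3p1:
  fixes p d n :: nat and A :: "(nat \<Rightarrow> nat) set"
  assumes "prime p"
    and "A \<subseteq> cube n"
    and "card A > p * card (monomials (d div p) p n)"
  shows "int_deg p n (kfold_sumset p p A) > d"
proof (rule ccontr)
  let ?B = "kfold_sumset p p A"
  have "p > 1" using assms(1) prime_gt_1_nat by blast
  then have "?B \<subseteq> Fpn p n"
    using kfold_sumset_subset_Fpn[OF subset_trans[OF assms(2) cube_subset_Fpn]] by simp
  then have "interpolates (n * (p - 1)) p n ?B" by (rule interpolates_Fpn[OF assms(1)])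
  then have "interpolates (int_deg p n ?B) p n ?B" unfolding int_deg_def by (rule LeastI)
  moreover assume "\<not> int_deg p n ?B > d"
  ultimately have "interpolates d p n ?B" by (simp add: interpolates_mono)
  with assms(1,2) have "card A \<le> p * card (small_subsets n (d div p))"
    by (rule card_le_of_interpolates_kfold_sumset)
  also have "\<dots> \<le> p * card (monomials (d div p) p n)"
    using card_small_subsets_le prime_ge_2_nat[OF assms(1)] by simp
  finally show False using assms(3) by simp
qed

end
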